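(* Let $n\geq 3$ be odd. Then the GFB trees $T_n^{gfb}$ and $T_{n-1}^{gfb}$ have a common maximal pending subtree, and $T_n^{gfb}$ and $T_{n+1}^{gfb}$ have a common maximal pending subtree.
   Context: A rooted binary tree with $n\geq 2$ leaves is a rooted tree whose root has degree 2 and all other internal nodes have degree 3; for $n=1$ it is a single node. Trees are considered up to isomorphism. The maximal pending subtrees of a tree with at least 2 leaves are the two subtrees rooted at the children of the root. The GFB tree $T_n^{gfb}$ is the output of: start with $n$ single-node trees; while more than one tree remains, remove a tree $u$ of minimal size (number of leaves), then remove a tree $v$ of minimal size among the remaining ones, and insert the tree with a new root whose children are the roots of $u$ and $v$; output the remaining tree. *)

theory Defs
  imports Main "HOL-Library.Multiset"
begin

text \<open>Rooted binary trees (ordered representation; isomorphism = unordered equality).\<close>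
datatype tree = Leaf | Node tree tree

fun leaves :: "tree \<Rightarrow> nat" where
  "leaves Leaf = 1"
| "leaves (Node l r) = leaves l + leaves r"

fun iso :: "tree \<Rightarrow> tree \<Rightarrow> bool" where
  "iso Leaf Leaf = True"
| "iso (Node a b) (Node c d) = ((iso a c \<and> iso b d) \<or> (iso a d \<and> iso b c))"
| "iso _ _ = False"

fun max_pending :: "tree \<Rightarrow> tree set" where
  "max_pending Leaf = {}"
| "max_pending (Node l r) = {l, r}"

text \<open>Runs of the GFB procedure on a forest (multiset of trees), with arbitrary
  tie-breaking: gfb_run F t means some execution started on F outputs t.\<close>
inductive gfb_run :: "tree multiset \<Rightarrow> tree \<Rightarrow> bool" where
  finish: "gfb_run {#t#} t"
| step: "\<lbrakk> u \<in># F; \<forall>w\<in>#F. leaves u \<le> leaves w;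
           v \<in># F - {#u#}; \<forall>w\<in>#F - {#u#}. leaves v \<le> leaves w;
           gfb_run (add_mset (Node u v) (F - {#u#} - {#v#})) t \<rbrakk>
         \<Longrightarrow> gfb_run F t"

definition is_gfb :: "nat \<Rightarrow> tree \<Rightarrow> bool" where
  "is_gfb n t \<longleftrightarrow> gfb_run (replicate_mset n Leaf) t"

definition common_max_pending :: "tree \<Rightarrow> tree \<Rightarrow> bool" where
  "common_max_pending t s \<longleftrightarrow> (\<exists>a\<in>max_pending t. \<exists>b\<in>max_pending s. iso a b)"

end

theory Submission
  imports Defs
begin

text \<open>
  Run on n leaves, the GFB procedure first pairs leaves into cherries, then cherries into perfect
  trees of height 2, and so on: at every stage the forest consists of copies of the perfect trees
  of heights j and j + 1 together with at most one tree whose size lies strictly in between.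
  Following the last merge shows that the root of the GFB tree with n \<ge> 2 leaves has the
  perfect tree of height m as a child, where 3 * 2^m / 2 \<le> n < 3 * 2^m, and both perfect
  trees of heights m and m + 1 as children when n = 3 * 2^m. Hence n + 1 shares the child of
  height m with n, either because it lies in the same range or because n + 1 = 3 * 2^m. For
  odd n \<ge> 5 the same holds for n - 1, and n = 3 is checked directly.
\<close>

fun perfect :: "nat \<Rightarrow> tree" where
  "perfect 0 = Leaf"
| "perfect (Suc i) = Node (perfect i) (perfect i)"

lemma leaves_perfect [simp]: "leaves (perfect i) = 2 ^ i"
  by (induction i) auto

lemma iso_refl: "iso x x"
  by (induction x) auto

lemma common_max_pending_perfect:
  "perfect k \<in> max_pending t \<Longrightarrow> perfect k \<in> max_pending s \<Longrightarrow> common_max_pending t s"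
  using iso_refl unfolding common_max_pending_def by blast

lemma double_pow_le_pow: "m < n \<Longrightarrow> 2 * (2::nat) ^ m \<le> 2 ^ n"
  using power_increasing[of "Suc m" n "2::nat"] by simp

definition gfb_scale :: "nat \<Rightarrow> nat \<Rightarrow> bool" where
  "gfb_scale m N \<longleftrightarrow> 3 * 2 ^ m \<le> 2 * N \<and> 2 * N < 3 * 2 ^ Suc m"

lemma gfb_scale_unique:
  assumes "gfb_scale m N" and "gfb_scale m' N"
  shows "m = m'"
proof -
  have "\<not> m < m'" if "gfb_scale m N" "gfb_scale m' N" for m m'
  proof
    assume "m < m'"
    then have "2 * (2::nat) ^ m \<le> 2 ^ m'"
      by (rule double_pow_le_pow)
    then show False
      using that unfolding gfb_scale_def power_Suc by linarith
  qed
  then show ?thesis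
    using assms by (meson linorder_neqE_nat)
qed

lemma three_pow_two_not_between:
  fixes N :: nat
  assumes "3 * 2 ^ j < 2 * N" and "N < 3 * 2 ^ j"
  shows "N \<noteq> 3 * 2 ^ m"
proof
  assume N: "N = 3 * 2 ^ m"
  show False
  proof (cases "m < j")
    case True
    then have "2 * (2::nat) ^ m \<le> 2 ^ j"
      by (rule double_pow_le_pow)
    then show False using assms(1) N by simp
  next
    case False
    then have "(2::nat) ^ j \<le> 2 ^ m"
      by (simp add: power_increasing)
    then show False using assms(2) N by simp
  qed
qed

lemma gfb_scale_pred:
  assumes "gfb_scale m n" and "odd n" and "n \<ge> 5"
  shows "gfb_scale m (n - 1)"
proof -
  obtain k where k: "m = Suc k"
    using assms(1,3) unfolding gfb_scale_def by (cases m) auto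
  have "3 * 2 ^ k \<noteq> n"
    using assms(2,3) by (cases k) auto
  then show ?thesis
    using assms(1) k unfolding gfb_scale_def by auto
qed

lemma gfb_scale_succ:
  assumes "gfb_scale m n" and "n + 1 \<noteq> 3 * 2 ^ m"
  shows "gfb_scale m (n + 1)"
  using assms unfolding gfb_scale_def by auto

definition perfect_pending :: "tree \<Rightarrow> bool" where
  "perfect_pending t \<longleftrightarrow>
     (\<exists>m. gfb_scale m (leaves t) \<and> perfect m \<in> max_pending t) \<and>
     (\<forall>m. leaves t = 3 * 2 ^ m \<longrightarrow> perfect m \<in> max_pending t \<and> perfect (Suc m) \<in> max_pending t)"

lemma perfect_pending_gfb_scale:
  assumes "perfect_pending t" and "gfb_scale m (leaves t)"
  shows "perfect m \<in> max_pending t"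
  using assms gfb_scale_unique unfolding perfect_pending_def by blast

lemma perfect_pending_Node_perfect_left:
  assumes "2 ^ j \<le> leaves x" and "leaves x < 2 ^ Suc j"
  shows "perfect_pending (Node (perfect j) x)"
proof -
  have "gfb_scale j (leaves (Node (perfect j) x))"
    using assms unfolding gfb_scale_def by simp
  moreover have "leaves (Node (perfect j) x) \<noteq> 3 * 2 ^ m" for m
    by (rule three_pow_two_not_between[where j = j]) (use assms in auto)
  ultimately show ?thesis
    unfolding perfect_pending_def by auto
qed

lemma perfect_pending_Node_perfect_right:
  assumes "2 ^ j < leaves x" and "leaves x \<le> 2 ^ Suc j"
  shows "perfect_pending (Node x (perfect (Suc j)))"
proof -
  have "gfb_scale (Suc j) (leaves (Node x (perfect (Suc j))))"
    using assms unfolding gfb_scale_def by simp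
  moreover have "leaves (Node x (perfect (Suc j))) \<noteq> 3 * 2 ^ m" for m
    by (rule three_pow_two_not_between[where j = "Suc j"]) (use assms in auto)
  ultimately show ?thesis
    unfolding perfect_pending_def by auto
qed

lemma perfect_pending_Node_perfect_Suc:
  "perfect_pending (Node (perfect j) (perfect (Suc j)))"
proof -
  have leaves_Node: "leaves (Node (perfect j) (perfect (Suc j))) = 3 * 2 ^ j"
    by simp
  show ?thesis
    unfolding perfect_pending_def gfb_scale_def leaves_Node by (auto intro!: exI[of _ "Suc j"])
qed

definition intermediate :: "nat \<Rightarrow> tree \<Rightarrow> bool" where
  "intermediate j s \<longleftrightarrow> 2 ^ j < leaves s \<and> leaves s < 2 ^ Suc j"

definition level_forest :: "nat \<Rightarrow> nat \<Rightarrow> nat \<Rightarrow> tree option \<Rightarrow> tree multiset" where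
  "level_forest j a b S = replicate_mset a (perfect j) + replicate_mset b (perfect (Suc j)) +
     (case S of None \<Rightarrow> {#} | Some s \<Rightarrow> {#s#})"

definition is_level_forest :: "nat \<Rightarrow> tree multiset \<Rightarrow> bool" where
  "is_level_forest j F \<longleftrightarrow> (\<exists>a b S. F = level_forest j a b S \<and> pred_option (intermediate j) S)"

definition least_leaves :: "tree \<Rightarrow> tree multiset \<Rightarrow> bool" where
  "least_leaves u F \<longleftrightarrow> u \<in># F \<and> (\<forall>w\<in>#F. leaves u \<le> leaves w)"

lemma mem_level_forest:
  "w \<in># level_forest j a b S \<longleftrightarrow> (0 < a \<and> w = perfect j) \<or> (0 < b \<and> w = perfect (Suc j)) \<or> S = Some w"
  by (auto simp: level_forest_def split: option.splits)

lemma least_leaves_level_forest: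
  assumes "pred_option (intermediate j) S" and "least_leaves u (level_forest j a b S)"
  obtains (perfect) a' where "a = Suc a'" and "u = perfect j"
    and "level_forest j a b S - {#u#} = level_forest j a' b S"
  | (intermediate) "a = 0" and "S = Some u"
    and "level_forest j a b S - {#u#} = level_forest j 0 b None"
  | (perfect_Suc) b' where "a = 0" and "S = None" and "b = Suc b'" and "u = perfect (Suc j)"
    and "level_forest j a b S - {#u#} = level_forest j 0 b' None"
proof -
  have u: "u \<in># level_forest j a b S" "\<And>w. w \<in># level_forest j a b S \<Longrightarrow> leaves u \<le> leaves w"
    using assms(2) unfolding least_leaves_def by auto
  have S: "2 ^ j < leaves s" "leaves s < 2 ^ Suc j" if "S = Some s" for s
    using assms(1) that unfolding intermediate_def by auto
  show thesis
  proof (cases a)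
    case (Suc a')
    then have "leaves u \<le> 2 ^ j"
      using u(2)[of "perfect j"] by (simp add: mem_level_forest)
    then have "u = perfect j"
      using u(1) S by (auto simp: mem_level_forest)
    then show thesis
      using Suc by (intro that(1)) (auto simp: level_forest_def)
  next
    case 0
    show thesis
    proof (cases S)
      case (Some s)
      then have "leaves u \<le> leaves s"
        using u(2)[of s] by (simp add: mem_level_forest)
      then have "S = Some u"
        using u(1) S Some 0 by (auto simp: mem_level_forest)
      then show thesis
        using 0 by (intro that(2)) (auto simp: level_forest_def)
    next
      case None
      then obtain b' where "b = Suc b'" "u = perfect (Suc j)"
        using u(1) 0 by (cases b) (auto simp: mem_level_forest)
      then show thesis
        using 0 None by (intro that(3)) (auto simp: level_forest_def)
    qed
  qed
qed

lemma least_pair_level_forest: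
  assumes S: "pred_option (intermediate j) S"
    and u: "least_leaves u (level_forest j a b S)"
    and v: "least_leaves v (level_forest j a b S - {#u#})"
  obtains (perfect_perfect) a' where "u = perfect j" and "v = perfect j"
    and "level_forest j a b S - {#u#} - {#v#} = level_forest j a' b S"
  | (perfect_intermediate) "u = perfect j" and "intermediate j v"
    and "level_forest j a b S - {#u#} - {#v#} = level_forest j 0 b None"
  | (perfect_perfect_Suc) b' where "u = perfect j" and "v = perfect (Suc j)"
    and "level_forest j a b S - {#u#} - {#v#} = level_forest j 0 b' None"
  | (intermediate_perfect_Suc) b' where "intermediate j u" and "v = perfect (Suc j)"
    and "level_forest j a b S - {#u#} - {#v#} = level_forest j 0 b' None"
  | (perfect_Suc_perfect_Suc) b' where "u = perfect (Suc j)" and "v = perfect (Suc j)"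
    and "level_forest j a b S - {#u#} - {#v#} = level_forest j 0 b' None"
proof -
  have none: "pred_option (intermediate j) None"
    by simp
  from S u show thesis
  proof (cases rule: least_leaves_level_forest)
    case (perfect a')
    note u_rest = perfect
    from S v[unfolded u_rest(3)] show thesis
    proof (cases rule: least_leaves_level_forest)
      case (perfect a'')
      then show thesis
        using u_rest perfect_perfect by simp
    next
      case intermediate
      then show thesis
        using u_rest S perfect_intermediate by simp
    next
      case (perfect_Suc b')
      then show thesis
        using u_rest perfect_perfect_Suc by simp
    qed
  next
    case intermediate
    from none v[unfolded intermediate(3)] show thesis
    proof (cases rule: least_leaves_level_forest)
      case (perfect_Suc b')
      then show thesis
        using intermediate S intermediate_perfect_Suc by simp
    qed simp_all
  next
    case (perfect_Suc b')
    note u_rest = perfect_Suc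
    from none v[unfolded u_rest(5)] show thesis
    proof (cases rule: least_leaves_level_forest)
      case (perfect_Suc b'')
      then show thesis
        using u_rest perfect_Suc_perfect_Suc by simp
    qed simp_all
  qed
qed

lemma least_pair_level_forest_perfect_pending:
  assumes "pred_option (intermediate j) S"
    and "least_leaves u (level_forest j a b S)"
    and "least_leaves v (level_forest j a b S - {#u#})"
  shows "perfect_pending (Node u v)"
  using assms
proof (cases rule: least_pair_level_forest)
  case perfect_perfect
  then show ?thesis
    using perfect_pending_Node_perfect_left[of j v] by simp
next
  case perfect_intermediate
  then show ?thesis
    using perfect_pending_Node_perfect_left[of j v] by (simp add: intermediate_def)
next
  case perfect_perfect_Suc
  then show ?thesis
    using perfect_pending_Node_perfect_Suc[of j] by simp
next
  case intermediate_perfect_Suc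
  then show ?thesis
    using perfect_pending_Node_perfect_right[of j u] by (simp add: intermediate_def)
next
  case perfect_Suc_perfect_Suc
  then show ?thesis
    using perfect_pending_Node_perfect_right[of j v] by simp
qed

lemma least_pair_level_forest_merge:
  assumes S: "pred_option (intermediate j) S"
    and "least_leaves u (level_forest j a b S)"
    and "least_leaves v (level_forest j a b S - {#u#})"
  shows "\<exists>j'. is_level_forest j' (add_mset (Node u v) (level_forest j a b S - {#u#} - {#v#}))"
proof -
  have level: "is_level_forest j' (level_forest j' a' b' S')" if "pred_option (intermediate j') S'"
    for j' a' b' S'
    using that unfolding is_level_forest_def by blast
  from assms show ?thesis
  proof (cases rule: least_pair_level_forest)
    case (perfect_perfect a')
    then have "is_level_forest j (level_forest j a' (Suc b) S)"
      using level[OF S] by simp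
    then show ?thesis
      using perfect_perfect by (auto simp: level_forest_def)
  next
    case perfect_intermediate
    then have "is_level_forest (Suc j) (level_forest (Suc j) b 0 (Some (Node u v)))"
      using level[of "Suc j"] by (simp add: intermediate_def)
    then show ?thesis
      using perfect_intermediate by (auto simp: level_forest_def)
  next
    case (perfect_perfect_Suc b')
    then have "is_level_forest (Suc j) (level_forest (Suc j) b' 0 (Some (Node u v)))"
      using level[of "Suc j"] by (simp add: intermediate_def)
    then show ?thesis
      using perfect_perfect_Suc by (auto simp: level_forest_def)
  next
    case (intermediate_perfect_Suc b')
    then have "is_level_forest (Suc j) (level_forest (Suc j) b' 0 (Some (Node u v)))"
      using level[of "Suc j"] by (simp add: intermediate_def)
    then show ?thesis
      using intermediate_perfect_Suc by (auto simp: level_forest_def)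
  next
    case (perfect_Suc_perfect_Suc b')
    then have "is_level_forest (Suc j) (level_forest (Suc j) b' 1 None)"
      using level[of "Suc j" None] by simp
    then show ?thesis
      using perfect_Suc_perfect_Suc by (auto simp: level_forest_def)
  qed
qed

lemma gfb_run_leaves: "gfb_run F t \<Longrightarrow> leaves t = (\<Sum>w\<in>#F. leaves w)"
proof (induction rule: gfb_run.induct)
  case (finish t)
  then show ?case by simp
next
  case (step u F v t)
  then have "F = add_mset u (add_mset v (F - {#u#} - {#v#}))"
    by (metis insert_DiffM)
  then have "(\<Sum>w\<in>#F. leaves w) = leaves (Node u v) + (\<Sum>w\<in>#F - {#u#} - {#v#}. leaves w)"
    by (metis add.assoc leaves.simps(2) sum_mset.insert image_mset_add_mset)
  with step.IH show ?case
    by simp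
qed

lemma gfb_run_singleton: "gfb_run {#s#} t \<Longrightarrow> t = s"
  by (cases rule: gfb_run.cases) auto

lemma gfb_run_level_forest_perfect_pending:
  "gfb_run F t \<Longrightarrow> is_level_forest j F \<Longrightarrow> 2 \<le> size F \<Longrightarrow> perfect_pending t"
proof (induction arbitrary: j rule: gfb_run.induct)
  case (finish t)
  then show ?case by simp
next
  case (step u F v t)
  obtain a b S where F: "F = level_forest j a b S" and S: "pred_option (intermediate j) S"
    using step.prems(1) unfolding is_level_forest_def by blast
  have u: "least_leaves u (level_forest j a b S)" and v: "least_leaves v (level_forest j a b S - {#u#})"
    using step.hyps(1-4) F unfolding least_leaves_def by auto
  let ?rest = "F - {#u#} - {#v#}"
  show ?case
  proof (cases "?rest = {#}")
    case True
    then have "t = Node u v"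
      using step.hyps(5) by (simp add: gfb_run_singleton)
    then show ?thesis
      using least_pair_level_forest_perfect_pending[OF S u v] by simp
  next
    case False
    then have "2 \<le> size (add_mset (Node u v) ?rest)"
      by (simp add: Suc_le_eq nonempty_has_size)
    then show ?thesis
      using least_pair_level_forest_merge[OF S u v] step.IH F by blast
  qed
qed

lemma is_gfb_perfect_pending:
  assumes "is_gfb n t" and "2 \<le> n"
  shows "leaves t = n" and "perfect_pending t"
proof -
  have run: "gfb_run (level_forest 0 n 0 None) t"
    using assms(1) unfolding is_gfb_def level_forest_def by simp
  then show "leaves t = n"
    using gfb_run_leaves unfolding level_forest_def by fastforce
  have "is_level_forest 0 (level_forest 0 n 0 None)"
    unfolding is_level_forest_def by force
  with run show "perfect_pending t"
    using gfb_run_level_forest_perfect_pending assms(2) by (simp add: level_forest_def)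
qed

lemma is_gfb_common_max_pending_Suc:
  assumes "is_gfb n t" and "is_gfb (n + 1) t'" and "2 \<le> n"
  shows "common_max_pending t t'"
proof -
  have t: "leaves t = n" "perfect_pending t" and t': "leaves t' = n + 1" "perfect_pending t'"
    using is_gfb_perfect_pending assms by auto
  obtain m where m: "gfb_scale m n" "perfect m \<in> max_pending t"
    using t unfolding perfect_pending_def by auto
  have "perfect m \<in> max_pending t'"
  proof (cases "n + 1 = 3 * 2 ^ m")
    case True
    then show ?thesis
      using t' unfolding perfect_pending_def by simp
  next
    case False
    then show ?thesis
      using m(1) gfb_scale_succ perfect_pending_gfb_scale[OF t'(2)] t'(1) by simp
  qed
  with m(2) show ?thesis
    by (rule common_max_pending_perfect)
qed

lemma is_gfb_common_max_pending_odd_pred: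
  assumes "is_gfb n t" and "is_gfb (n - 1) t'" and "odd n" and "3 \<le> n"
  shows "common_max_pending t t'"
proof -
  have t: "leaves t = n" "perfect_pending t" and t': "leaves t' = n - 1" "perfect_pending t'"
    using is_gfb_perfect_pending assms(1,2,4) by (simp_all add: le_diff_conv2)
  obtain m where m: "gfb_scale m n" "perfect m \<in> max_pending t"
    using t unfolding perfect_pending_def by auto
  show ?thesis
  proof (cases "n = 3")
    case True
    then have "perfect 0 \<in> max_pending t"
      using t unfolding perfect_pending_def by force
    moreover have "perfect 0 \<in> max_pending t'"
      using perfect_pending_gfb_scale[OF t'(2), of 0] t'(1) True by (simp add: gfb_scale_def)
    ultimately show ?thesis
      by (rule common_max_pending_perfect)
  next
    case False
    then have "n \<ge> 5"
      using assms(3,4) by presburger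
    then have "perfect m \<in> max_pending t'"
      using gfb_scale_pred[OF m(1) assms(3)] perfect_pending_gfb_scale[OF t'(2)] t'(1) by simp
    with m(2) show ?thesis
      by (rule common_max_pending_perfect)
  qed
qed

theorem lemma9:
  fixes n :: nat and t t' t'' :: tree
  assumes "odd n" and "n \<ge> 3"
    and "is_gfb n t" and "is_gfb (n - 1) t'" and "is_gfb (n + 1) t''"
  shows "common_max_pending t t' \<and> common_max_pending t t''"
  using is_gfb_common_max_pending_odd_pred[OF assms(3,4,1,2)]
    is_gfb_common_max_pending_Suc[OF assms(3,5)] assms(2)
  by simp

end
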